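(* Let $d\ge2$, $l\in\{1,\dots,d\}$, $c\in\mathbb R$, and let $H=\{h\in\mathbb R^d:h\cdot e_l=c\}$. Let $x,y\in\mathbb Z^d$ satisfy $x\cdot e_l\ge c$ and $y\cdot e_l>c$. Let $V=\{e_i+e_j,\ e_i-e_j,\ -e_i+e_j,\ -e_i-e_j:\ i,j=1,\dots,d\}$. Fix an integer $m\ge1000$ and suppose $|x-y|_1\le m$. Then there exist $y^*\in\mathbb Z^d$ with $y^*\cdot e_l>c$ and $|y-y^*|_\infty\le1$, an integer $K\le 1609+104^{d-1}$, vectors $v_1,\dots,v_K\in V$ and integers $a_1,\dots,a_K$ such that for each $k\le K$, $$\tfrac{m}{1000}\le|a_k|\le\tfrac{m}{10},\qquad \Big|x+\sum_{i=1}^k a_iv_i-y\Big|_\infty\le2m,\qquad \Big(x+\sum_{i=1}^k a_iv_i\Big)\cdot e_l>c,$$ and $y^*-x=\sum_{i=1}^K a_iv_i$.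
   Context: $e_1,\dots,e_d$ are the standard basis vectors of $\mathbb R^d$. *)

theory Defs
  imports "HOL-Analysis.Analysis"
begin

text \<open>Integer lattice points in R^d are modelled as int^'n (d = CARD('n)).
  Standard basis vector e_i is axis i 1.\<close>

definition l1norm :: "int ^ 'n \<Rightarrow> int" where
  "l1norm x = (\<Sum>i\<in>UNIV. \<bar>x $ i\<bar>)"

definition linfnorm :: "int ^ 'n \<Rightarrow> int" where
  "linfnorm x = Max {\<bar>x $ i\<bar> | i. True}"

definition Vset :: "(int ^ 'n) set" where
  "Vset = {s *s axis i 1 + t *s axis j 1 | i j s t. s \<in> {1, -1} \<and> t \<in> {1, -1}}"

end

theory Submission
  imports Defs
begin

(* Replace y by the point y* obtained by raising every coordinate in which y - x is odd by one,
   so that y* - x = 2 n with n integral.  Since V contains e_i + e_i = 2 e_i, the walk can move one coordinate at a time, treating the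
   coordinate l first.  Coordinate i is moved by 2 n_i, where n_i is cut into chunks of absolute
   value between L = m div 1000 + 1 and U = m div 10; a remainder of size below L is realised by
   overshooting by L and stepping back.  All partial sums then lie between min 0 n_i and
   max 0 n_i + L, and after the first chunk they are at least min 1 n_i: the first bound keeps every
   point within 2m of y, the second keeps the l-th coordinate above c, and afterwards it stays at
   y*_l > c.  As |n_i| <= (m + 1) / 2 < 6 U, every coordinate needs at most 7 chunks. *)

definition chunk_decomposition :: "int \<Rightarrow> int \<Rightarrow> int \<Rightarrow> int list \<Rightarrow> bool" where
  "chunk_decomposition L U n as \<longleftrightarrow>
     sum_list as = n \<and> (\<forall>a\<in>set as. L \<le> \<bar>a\<bar> \<and> \<bar>a\<bar> \<le> U) \<and>
     int (length as) \<le> \<bar>n\<bar> div U + 2 \<and>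
     (\<forall>k\<in>{1..length as}. min 1 n \<le> sum_list (take k as) \<and> sum_list (take k as) \<le> max 0 n + L)"

lemma chunk_decomposition_Cons:
  assumes as: "chunk_decomposition L U (n - a) as" and LU: "1 \<le> L" "L \<le> U"
    and n: "a = U \<and> U < n \<or> a = - U \<and> n < - U"
  shows "chunk_decomposition L U n (a # as)"
proof -
  have abs_a: "\<bar>a\<bar> = U" and abs_n: "\<bar>n\<bar> = \<bar>n - a\<bar> + U"
    using n LU by auto
  have "\<bar>n\<bar> div U = \<bar>n - a\<bar> div U + 1"
    unfolding abs_n using LU by simp
  then have length: "int (length (a # as)) \<le> \<bar>n\<bar> div U + 2"
    using as unfolding chunk_decomposition_def by simp
  have prefix: "min 1 n \<le> sum_list (take k (a # as)) \<and> sum_list (take k (a # as)) \<le> max 0 n + L"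
    if k: "k \<in> {1..length (a # as)}" for k
  proof (cases "k = 1")
    case True
    then show ?thesis using LU n by auto
  next
    case False
    then have "k - 1 \<in> {1..length as}" "take k (a # as) = a # take (k - 1) as"
      using k by (auto simp: take_Cons')
    moreover have "\<forall>j\<in>{1..length as}. min 1 (n - a) \<le> sum_list (take j as) \<and>
        sum_list (take j as) \<le> max 0 (n - a) + L"
      using as unfolding chunk_decomposition_def by blast
    ultimately have "min 1 (n - a) \<le> sum_list (take (k - 1) as)"
      "sum_list (take (k - 1) as) \<le> max 0 (n - a) + L" "take k (a # as) = a # take (k - 1) as"
      by blast+
    then show ?thesis using LU n by auto
  qed
  show ?thesis
    using as abs_a LU length prefix unfolding chunk_decomposition_def by auto
qed

lemma chunk_decomposition_exists:
  assumes "1 \<le> L" "2 * L \<le> U"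
  shows "\<exists>as. chunk_decomposition L U n as"
proof (induction "nat \<bar>n\<bar>" arbitrary: n rule: less_induct)
  case less
  consider "U < n" | "n < - U" | "L \<le> \<bar>n\<bar>" "\<bar>n\<bar> \<le> U" | "n = 0" | "0 < n" "n < L" | "n < 0" "- L < n"
    by linarith
  then show ?case
  proof cases
    case 1
    with less obtain as where "chunk_decomposition L U (n - U) as" using assms by fastforce
    then show ?thesis using chunk_decomposition_Cons 1 assms by fastforce
  next
    case 2
    with less obtain as where "chunk_decomposition L U (n - - U) as" using assms by fastforce
    then show ?thesis using chunk_decomposition_Cons 2 assms by fastforce
  next
    case 3
    then have "chunk_decomposition L U n [n]"
      using assms by (auto simp: chunk_decomposition_def pos_imp_zdiv_nonneg_iff)
    then show ?thesis ..
  next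
    case 4
    then have "chunk_decomposition L U n []"
      by (simp add: chunk_decomposition_def)
    then show ?thesis ..
  next
    case 5
    then have "chunk_decomposition L U n [n + L, - L]"
      using assms by (auto simp: chunk_decomposition_def numeral_2_eq_2 le_Suc_eq)
    then show ?thesis ..
  next
    case 6
    then have "chunk_decomposition L U n [L, n - L]"
      using assms by (auto simp: chunk_decomposition_def numeral_2_eq_2 le_Suc_eq)
    then show ?thesis ..
  qed
qed

lemma chunk_decomposition_prefix_bounds:
  assumes "chunk_decomposition L U n as" "0 \<le> L" "k \<le> length as"
  shows "min 0 n \<le> sum_list (take k as) \<and> sum_list (take k as) \<le> max 0 n + L"
proof (cases "k = 0")
  case True
  then show ?thesis using assms(2) by simp
next
  case False
  then have "k \<in> {1..length as}" using assms(3) by simp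
  then show ?thesis using assms(1) unfolding chunk_decomposition_def by fastforce
qed

lemma length_chunk_decomposition_le:
  assumes "chunk_decomposition L U n as" "0 < U" "\<bar>n\<bar> < int q * U"
  shows "length as \<le> q + 1"
proof -
  have "\<bar>n\<bar> div U * U < int q * U"
    using div_mult_mod_eq[of "\<bar>n\<bar>" U] pos_mod_sign[of U "\<bar>n\<bar>"] assms(2,3) by linarith
  then have "\<bar>n\<bar> div U < int q"
    using assms(2) by simp
  then show ?thesis using assms(1) unfolding chunk_decomposition_def by linarith
qed

definition walk_sum :: "('a::comm_ring_1 \<times> ('a ^ 'n)) list \<Rightarrow> 'a ^ 'n" where
  "walk_sum ss = (\<Sum>(a, v)\<leftarrow>ss. a *s v)"

(* The starting point is not a point of the walk, since it may lie on the hyperplane. *)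
definition walk_points :: "'a::comm_ring_1 ^ 'n \<Rightarrow> ('a \<times> ('a ^ 'n)) list \<Rightarrow> ('a ^ 'n) set" where
  "walk_points x ss = (\<lambda>k. x + walk_sum (take k ss)) ` {1..length ss}"

lemma walk_sum_Nil [simp]: "walk_sum [] = 0"
  by (simp add: walk_sum_def)

lemma walk_sum_append [simp]: "walk_sum (ss @ ts) = walk_sum ss + walk_sum ts"
  by (simp add: walk_sum_def)

lemma walk_points_append:
  "walk_points x (ss @ ts) = walk_points x ss \<union> walk_points (x + walk_sum ss) ts"
proof -
  have "k \<in> (\<lambda>k. length ss + k) ` {1..length ts}"
    if "length ss < k" "k \<le> length ss + length ts" for k
    using that by (intro image_eqI[of _ _ "k - length ss"]) auto
  then have indices: "{1..length (ss @ ts)} = {1..length ss} \<union> (\<lambda>k. length ss + k) ` {1..length ts}"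
    by force
  have "walk_points x (ss @ ts) =
      (\<lambda>k. x + walk_sum (take k (ss @ ts))) ` {1..length ss} \<union>
      (\<lambda>k. x + walk_sum (take (length ss + k) (ss @ ts))) ` {1..length ts}"
    unfolding walk_points_def by (simp only: indices image_Un image_image)
  also have "\<dots> = walk_points x ss \<union> walk_points (x + walk_sum ss) ts"
    unfolding walk_points_def by (intro arg_cong2[where f = "(\<union>)"] image_cong) (simp_all add: add.assoc)
  finally show ?thesis .
qed

definition axis_walk :: "'n \<Rightarrow> 'a::comm_ring_1 list \<Rightarrow> ('a \<times> ('a ^ 'n)) list" where
  "axis_walk i as = map (\<lambda>a. (a, axis i 1 + axis i 1)) as"

lemma length_axis_walk [simp]: "length (axis_walk i as) = length as"
  by (simp add: axis_walk_def)

lemma walk_sum_axis_walk: "walk_sum (axis_walk i as) = axis i (2 * sum_list as)"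
  by (induction as) (auto simp: walk_sum_def axis_walk_def vec_eq_iff axis_def algebra_simps)

lemma walk_points_axis_walk:
  "walk_points x (axis_walk i as) = (\<lambda>k. x + axis i (2 * sum_list (take k as))) ` {1..length as}"
proof -
  have "take k (axis_walk i as) = axis_walk i (take k as)" for k
    by (simp add: axis_walk_def take_map)
  then show ?thesis
    unfolding walk_points_def by (simp add: walk_sum_axis_walk)
qed

definition axis_walks :: "('n \<Rightarrow> 'a::comm_ring_1 list) \<Rightarrow> 'n list \<Rightarrow> ('a \<times> ('a ^ 'n)) list" where
  "axis_walks as cs = concat (map (\<lambda>i. axis_walk i (as i)) cs)"

lemma axis_walks_simps [simp]:
  "axis_walks as [] = []"
  "axis_walks as (i # cs) = axis_walk i (as i) @ axis_walks as cs"
  by (simp_all add: axis_walks_def)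

lemma length_axis_walks_le: "(\<And>i. length (as i) \<le> b) \<Longrightarrow> length (axis_walks as cs) \<le> b * length cs"
  by (induction cs) (simp_all add: add_mono)

lemma walk_sum_axis_walks_nth:
  "distinct cs \<Longrightarrow> walk_sum (axis_walks as cs) $ j = (if j \<in> set cs then 2 * sum_list (as j) else 0)"
  by (induction cs) (auto simp: walk_sum_axis_walk axis_def)

lemma walk_points_axis_walks_nth:
  assumes "distinct cs" "p \<in> walk_points x (axis_walks as cs)"
  shows "\<exists>k \<le> length (as j). p $ j = x $ j + 2 * sum_list (take k (as j))"
    and "j \<notin> set cs \<Longrightarrow> p $ j = x $ j"
proof -
  have "(\<exists>k \<le> length (as j). p $ j = x $ j + 2 * sum_list (take k (as j))) \<and>
    (j \<notin> set cs \<longrightarrow> p $ j = x $ j)"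
    using assms
  proof (induction cs arbitrary: x)
    case Nil
    then show ?case by (simp add: walk_points_def)
  next
    case (Cons i cs)
    let ?x' = "x + axis i (2 * sum_list (as i))"
    have "p \<in> walk_points x (axis_walk i (as i)) \<union> walk_points ?x' (axis_walks as cs)"
      using Cons.prems(2) by (simp add: walk_points_append walk_sum_axis_walk)
    then consider
      k where "k \<in> {1..length (as i)}" "p = x + axis i (2 * sum_list (take k (as i)))"
      | "p \<in> walk_points ?x' (axis_walks as cs)"
      unfolding walk_points_axis_walk by blast
    then show ?case
    proof cases
      case 1
      then have pj: "p $ j = x $ j + (if j = i then 2 * sum_list (take k (as i)) else 0)"
        by (simp add: axis_def)
      show ?thesis
      proof (cases "j = i")
        case True
        then show ?thesis using pj 1(1) Cons.prems(1) by auto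
      next
        case False
        then show ?thesis using pj by (auto intro: exI[where x = 0])
      qed
    next
      case 2
      have "distinct cs" using Cons.prems(1) by simp
      from Cons.IH[OF this 2]
      have "(\<exists>k \<le> length (as j). p $ j = ?x' $ j + 2 * sum_list (take k (as j))) \<and>
          (j \<notin> set cs \<longrightarrow> p $ j = ?x' $ j)" .
      then show ?thesis using Cons.prems(1) by (cases "j = i") (auto simp: axis_def)
    qed
  qed
  then show "\<exists>k \<le> length (as j). p $ j = x $ j + 2 * sum_list (take k (as j))"
    and "j \<notin> set cs \<Longrightarrow> p $ j = x $ j"
    by auto
qed

lemma walk_points_axis_walks_head:
  assumes "distinct (l # cs)" "p \<in> walk_points x (axis_walks as (l # cs))"
  shows "(\<exists>k\<in>{1..length (as l)}. p $ l = x $ l + 2 * sum_list (take k (as l))) \<or>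
    p $ l = x $ l + 2 * sum_list (as l)"
proof -
  let ?x' = "x + axis l (2 * sum_list (as l))"
  have "p \<in> walk_points x (axis_walk l (as l)) \<or> p \<in> walk_points ?x' (axis_walks as cs)"
    using assms(2) by (simp add: walk_points_append walk_sum_axis_walk)
  then show ?thesis
  proof
    assume "p \<in> walk_points x (axis_walk l (as l))"
    then show ?thesis unfolding walk_points_axis_walk by auto
  next
    assume p': "p \<in> walk_points ?x' (axis_walks as cs)"
    have "distinct cs" "l \<notin> set cs"
      using assms(1) by simp_all
    with p' have "p $ l = ?x' $ l"
      using walk_points_axis_walks_nth(2) by blast
    then show ?thesis by simp
  qed
qed

lemma set_axis_walks:
  "(a, v) \<in> set (axis_walks as cs) \<Longrightarrow> \<exists>i. a \<in> set (as i) \<and> v = axis i 1 + axis i 1"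
  by (auto simp: axis_walks_def axis_walk_def)

lemma chunk_axis_walks:
  fixes x z :: "int ^ 'n"
  assumes cs: "distinct (l # cs)" "set (l # cs) = UNIV"
    and as: "\<And>i. chunk_decomposition L U ((z $ i - x $ i) div 2) (as i)"
    and even: "\<And>i. even (z $ i - x $ i)" and L: "0 \<le> L"
  shows "x + walk_sum (axis_walks as (l # cs)) = z"
    and "p \<in> walk_points x (axis_walks as (l # cs)) \<Longrightarrow>
      min (x $ j) (z $ j) \<le> p $ j \<and> p $ j \<le> max (x $ j) (z $ j) + 2 * L"
    and "p \<in> walk_points x (axis_walks as (l # cs)) \<Longrightarrow> min (x $ l + 2) (z $ l) \<le> p $ l"
proof -
  define n where "n i = (z $ i - x $ i) div 2" for i
  have z: "z $ i = x $ i + 2 * n i" for i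
    unfolding n_def using even[of i] by simp
  have sum_as: "sum_list (as i) = n i" for i
    using as[of i] unfolding n_def chunk_decomposition_def by blast
  have "walk_sum (axis_walks as (l # cs)) $ i = 2 * n i" for i
    using walk_sum_axis_walks_nth[OF cs(1), of as i] by (simp only: cs(2) UNIV_I if_True sum_as)
  then show "x + walk_sum (axis_walks as (l # cs)) = z"
    unfolding vec_eq_iff using z by simp
  assume p: "p \<in> walk_points x (axis_walks as (l # cs))"
  obtain k where k: "k \<le> length (as j)" "p $ j = x $ j + 2 * sum_list (take k (as j))"
    using walk_points_axis_walks_nth(1)[OF cs(1) p] by blast
  have "min 0 (n j) \<le> sum_list (take k (as j)) \<and> sum_list (take k (as j)) \<le> max 0 (n j) + L"
    using chunk_decomposition_prefix_bounds[OF as L k(1)] unfolding n_def by simp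
  then show "min (x $ j) (z $ j) \<le> p $ j \<and> p $ j \<le> max (x $ j) (z $ j) + 2 * L"
    using k(2) z[of j] by linarith
  from walk_points_axis_walks_head[OF cs(1) p]
  show "min (x $ l + 2) (z $ l) \<le> p $ l"
  proof
    assume "\<exists>k\<in>{1..length (as l)}. p $ l = x $ l + 2 * sum_list (take k (as l))"
    then obtain k where k: "k \<in> {1..length (as l)}" "p $ l = x $ l + 2 * sum_list (take k (as l))"
      by blast
    have "min 1 (n l) \<le> sum_list (take k (as l))"
      using as[of l] k(1) unfolding n_def chunk_decomposition_def by blast
    then show ?thesis using k(2) z[of l] by linarith
  next
    assume "p $ l = x $ l + 2 * sum_list (as l)"
    then show ?thesis using z[of l] sum_as[of l] by simp
  qed
qed

lemma linfnorm_le_iff: "linfnorm z \<le> b \<longleftrightarrow> (\<forall>i. \<bar>z $ i\<bar> \<le> b)"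
proof -
  have "{\<bar>z $ i\<bar> | i. True} = range (\<lambda>i. \<bar>z $ i\<bar>)" by auto
  then show ?thesis unfolding linfnorm_def by (simp add: Max_le_iff)
qed

lemma abs_nth_le_l1norm: "\<bar>z $ i\<bar> \<le> l1norm z"
  unfolding l1norm_def by (rule member_le_sum) auto

lemma double_axis_in_Vset: "axis i 1 + axis i 1 \<in> Vset"
proof -
  have "axis i 1 + axis i 1 = 1 *s axis i 1 + (1::int) *s axis i 1" by simp
  then show ?thesis unfolding Vset_def by blast
qed

lemma seven_mult_le_1609_plus_104_power: "7 * (k + 1) \<le> 1609 + (104::nat) ^ k"
proof (induction k)
  case (Suc k)
  have "7 * (Suc k + 1) = 7 * (k + 1) + 7" by simp
  also have "\<dots> \<le> 1609 + 104 ^ k + 7" using Suc.IH by linarith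
  also have "\<dots> \<le> 1609 + 104 ^ Suc k"
    using one_le_power[of "104::nat" k] unfolding power_Suc by linarith
  finally show ?case .
qed simp

lemma exists_even_difference_neighbour:
  fixes x y :: "int ^ 'n"
  obtains z where "\<And>i. y $ i \<le> z $ i" "\<And>i. z $ i \<le> y $ i + 1" "\<And>i. even (z $ i - x $ i)"
proof
  let ?z = "\<chi> i. if even (y $ i - x $ i) then y $ i else y $ i + 1"
  show "y $ i \<le> ?z $ i" "?z $ i \<le> y $ i + 1" "even (?z $ i - x $ i)" for i
    by auto
qed

lemma lattice_walk_exists:
  fixes x y :: "int ^ 'n" and l :: 'n and c :: real and m :: int
  assumes x_l: "c \<le> real_of_int (x $ l)" and y_l: "c < real_of_int (y $ l)"
    and m: "1000 \<le> m" and xy: "l1norm (x - y) \<le> m"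
  obtains ys ss where "c < real_of_int (ys $ l)" "linfnorm (y - ys) \<le> 1" "length ss \<le> 7 * CARD('n)"
    "\<forall>(a, v)\<in>set ss. v \<in> Vset \<and>
       real_of_int m / 1000 \<le> real_of_int \<bar>a\<bar> \<and> real_of_int \<bar>a\<bar> \<le> real_of_int m / 10"
    "\<forall>p\<in>walk_points x ss. linfnorm (p - y) \<le> 2 * m \<and> c < real_of_int (p $ l)"
    "x + walk_sum ss = ys"
proof -
  define L where "L = m div 1000 + 1"
  define U where "U = m div 10"
  have "m div 1000 * 1000 + m mod 1000 = m" "0 \<le> m mod 1000" "m mod 1000 < 1000"
    "m div 10 * 10 + m mod 10 = m" "0 \<le> m mod 10" "m mod 10 < 10"
    by simp_all
  then have "m < 1000 * L" "1000 * L \<le> m + 1000" "10 * U \<le> m" "m < 10 * U + 10"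
    using L_def U_def by linarith+
  then have L: "0 \<le> L" "1 \<le> L" "2 * L + 1 \<le> m" and U: "2 * L \<le> U" "m + 1 < 12 * U"
    and scale: "real_of_int m / 1000 \<le> real_of_int L" "real_of_int U \<le> real_of_int m / 10"
    using m by linarith+
  obtain ys where ys: "\<And>i. y $ i \<le> ys $ i" "\<And>i. ys $ i \<le> y $ i + 1" "\<And>i. even (ys $ i - x $ i)"
    using exists_even_difference_neighbour by blast
  have xy_i: "\<bar>x $ i - y $ i\<bar> \<le> m" for i
    using abs_nth_le_l1norm[of "x - y" i] xy by simp
  have "\<forall>i. \<exists>as. chunk_decomposition L U ((ys $ i - x $ i) div 2) as"
    using chunk_decomposition_exists[OF L(2) U(1)] by blast
  from choice[OF this] obtain as where as: "\<And>i. chunk_decomposition L U ((ys $ i - x $ i) div 2) (as i)"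
    by blast
  have "finite (UNIV - {l})"
    by simp
  then obtain rest where "distinct rest" "set rest = UNIV - {l}"
    using finite_distinct_list by blast
  then have rest: "distinct (l # rest)" "set (l # rest) = UNIV"
    by simp_all
  note walk = chunk_axis_walks[OF rest as ys(3) L(1)]
  show thesis
  proof (rule that[of ys "axis_walks as (l # rest)"])
    show "c < real_of_int (ys $ l)"
      using ys(1)[of l] y_l by linarith
    show "linfnorm (y - ys) \<le> 1"
      unfolding linfnorm_le_iff using ys(1,2) by (simp add: abs_le_iff algebra_simps)
    have "length (as i) \<le> 6 + 1" for i
    proof (rule length_chunk_decomposition_le[OF as])
      show "0 < U" using L U by linarith
      have "ys $ i - x $ i = 2 * ((ys $ i - x $ i) div 2)" using ys(3)[of i] by simp
      then show "\<bar>(ys $ i - x $ i) div 2\<bar> < int 6 * U" using ys(1,2)[of i] xy_i[of i] U by linarith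
    qed
    moreover have "length (l # rest) = CARD('n)"
      using distinct_card[OF rest(1)] rest(2) by simp
    ultimately show "length (axis_walks as (l # rest)) \<le> 7 * CARD('n)"
      using length_axis_walks_le[of as 7 "l # rest"] by simp
    show "\<forall>(a, v)\<in>set (axis_walks as (l # rest)). v \<in> Vset \<and>
       real_of_int m / 1000 \<le> real_of_int \<bar>a\<bar> \<and> real_of_int \<bar>a\<bar> \<le> real_of_int m / 10"
    proof clarify
      fix a v assume "(a, v) \<in> set (axis_walks as (l # rest))"
      then obtain i where "a \<in> set (as i)" "v = axis i 1 + axis i 1"
        using set_axis_walks by blast
      moreover have "L \<le> \<bar>a\<bar> \<and> \<bar>a\<bar> \<le> U"
        using as[of i] \<open>a \<in> set (as i)\<close> unfolding chunk_decomposition_def by blast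
      ultimately show "v \<in> Vset \<and>
        real_of_int m / 1000 \<le> real_of_int \<bar>a\<bar> \<and> real_of_int \<bar>a\<bar> \<le> real_of_int m / 10"
        using double_axis_in_Vset scale by force
    qed
    show "\<forall>p\<in>walk_points x (axis_walks as (l # rest)).
        linfnorm (p - y) \<le> 2 * m \<and> c < real_of_int (p $ l)"
    proof
      fix p assume p: "p \<in> walk_points x (axis_walks as (l # rest))"
      have "\<bar>p $ j - y $ j\<bar> \<le> 2 * m" for j
        using walk(2)[OF p, of j] ys(1,2)[of j] xy_i[of j] L(3) by (simp add: abs_le_iff) linarith
      moreover have "c < real_of_int (p $ l)"
        using walk(3)[OF p] x_l y_l ys(1)[of l] by linarith
      ultimately show "linfnorm (p - y) \<le> 2 * m \<and> c < real_of_int (p $ l)"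
        unfolding linfnorm_le_iff by simp
    qed
    show "x + walk_sum (axis_walks as (l # rest)) = ys"
      by (rule walk(1))
  qed
qed

lemma walk_sum_take_eq_indexed_sum:
  "k \<le> length ss \<Longrightarrow> walk_sum (take k ss) = (\<Sum>i=1..k. fst (ss ! (i - 1)) *s snd (ss ! (i - 1)))"
proof (induction k)
  case (Suc k)
  then have "take (Suc k) ss = take k ss @ [ss ! k]"
    by (simp add: take_Suc_conv_app_nth)
  with Suc show ?case
    by (simp add: walk_sum_def split_beta)
qed simp

theorem lemmaA5:
  fixes x y :: "int ^ 'n" and l :: 'n and c :: real and m :: int
  assumes "CARD('n) \<ge> 2"
    and "real_of_int (x $ l) \<ge> c"
    and "real_of_int (y $ l) > c"
    and "m \<ge> 1000"
    and "l1norm (x - y) \<le> m"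
  shows "\<exists>ystar :: int ^ 'n. \<exists>K :: nat. \<exists>v :: nat \<Rightarrow> int ^ 'n. \<exists>a :: nat \<Rightarrow> int.
           real_of_int (ystar $ l) > c \<and> linfnorm (y - ystar) \<le> 1 \<and>
           K \<le> 1609 + 104 ^ (CARD('n) - 1) \<and>
           (\<forall>k\<in>{1..K}. v k \<in> Vset) \<and>
           (\<forall>k\<in>{1..K}.
              real_of_int m / 1000 \<le> real_of_int \<bar>a k\<bar> \<and>
              real_of_int \<bar>a k\<bar> \<le> real_of_int m / 10 \<and>
              linfnorm (x + (\<Sum>i=1..k. a i *s v i) - y) \<le> 2 * m \<and>
              real_of_int ((x + (\<Sum>i=1..k. a i *s v i)) $ l) > c) \<and>
           ystar - x = (\<Sum>i=1..K. a i *s v i)"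
proof -
  obtain ys ss where ys: "c < real_of_int (ys $ l)" "linfnorm (y - ys) \<le> 1"
    and length: "length ss \<le> 7 * CARD('n)"
    and steps: "\<forall>(a, v)\<in>set ss. v \<in> Vset \<and>
       real_of_int m / 1000 \<le> real_of_int \<bar>a\<bar> \<and> real_of_int \<bar>a\<bar> \<le> real_of_int m / 10"
    and points: "\<forall>p\<in>walk_points x ss. linfnorm (p - y) \<le> 2 * m \<and> c < real_of_int (p $ l)"
    and ends: "x + walk_sum ss = ys"
    using lattice_walk_exists[OF assms(2-5)] .
  define a where "a k = fst (ss ! (k - 1))" for k
  define v where "v k = snd (ss ! (k - 1))" for k
  have partial: "(\<Sum>i=1..k. a i *s v i) = walk_sum (take k ss)" if "k \<le> length ss" for k
    unfolding a_def v_def using walk_sum_take_eq_indexed_sum[OF that] by simp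
  have "(a k, v k) \<in> set ss" "x + (\<Sum>i=1..k. a i *s v i) \<in> walk_points x ss"
    if "k \<in> {1..length ss}" for k
    using that partial unfolding a_def v_def walk_points_def by auto
  moreover have "length ss \<le> 1609 + 104 ^ (CARD('n) - 1)"
    using length seven_mult_le_1609_plus_104_power[of "CARD('n) - 1"] by simp
  moreover have "ys - x = (\<Sum>i=1..length ss. a i *s v i)"
    using ends partial by auto
  ultimately show ?thesis
    using ys steps points by (intro exI[of _ ys] exI[of _ "length ss"] exI[of _ v] exI[of _ a]) fastforce
qed

end
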